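(* Let $\mathfrak{p}$ be a prime ideal in a pc monoid $A$. Then: (1) $A/\mathfrak{p}$ is a cancellative monoid; (2) if $A$ is pctf, then $(A/\mathfrak{p})^+$ is a torsionfree pointed group; (3) if $A$ is cancellative and normal, then $A/\mathfrak{p}$ is cancellative and normal.
   Context: A monoid is a pointed commutative monoid (basepoint $0$, $0\cdot a=0$, identity $1$). An ideal is a subset $I\ni0$ with $AI\subseteq I$; $A/I$ collapses $I$ to $0$; a proper ideal $\mathfrak{p}$ is prime if $A\setminus\mathfrak{p}$ is multiplicatively closed. $A$ is cancellative if $ac=bc$ with $c\ne0$ implies $a=b$; pc if $A\cong C/I$ with $C$ cancellative; pctf if $A\cong C/I$ with $C$ cancellative and torsionfree ($a^n=b^n$ for some $n\ge1$ implies $a=b$). For cancellative $C$, the pointed group completion $C^+$ is the group completion of $C\setminus\{0\}$ with a basepoint adjoined; a pointed group is torsionfree if its underlying group (without basepoint) is. The normalization of a cancellative $A$ is $A_{\mathrm{nor}}=\{\alpha\in A^+:\alpha^n\in A\text{ for some }n\ge1\}$ and $A$ is normal if $A=A_{\mathrm{nor}}$. *)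

theory Defs
  imports Main
begin

record 'a pmon =
  pm_carrier :: "'a set"
  pm_mult :: "'a \<Rightarrow> 'a \<Rightarrow> 'a"
  pm_one :: 'a
  pm_zero :: 'a

definition pointed_monoid :: "'a pmon \<Rightarrow> bool" where
  "pointed_monoid M \<longleftrightarrow>
     pm_one M \<in> pm_carrier M \<and> pm_zero M \<in> pm_carrier M \<and>
     (\<forall>a\<in>pm_carrier M. \<forall>b\<in>pm_carrier M. pm_mult M a b \<in> pm_carrier M) \<and>
     (\<forall>a\<in>pm_carrier M. \<forall>b\<in>pm_carrier M. \<forall>c\<in>pm_carrier M.
        pm_mult M (pm_mult M a b) c = pm_mult M a (pm_mult M b c)) \<and>
     (\<forall>a\<in>pm_carrier M. \<forall>b\<in>pm_carrier M. pm_mult M a b = pm_mult M b a) \<and>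
     (\<forall>a\<in>pm_carrier M. pm_mult M (pm_one M) a = a) \<and>
     (\<forall>a\<in>pm_carrier M. pm_mult M (pm_zero M) a = pm_zero M)"

primrec pm_pow :: "'a pmon \<Rightarrow> 'a \<Rightarrow> nat \<Rightarrow> 'a" where
  "pm_pow M x 0 = pm_one M"
| "pm_pow M x (Suc n) = pm_mult M x (pm_pow M x n)"

definition pm_ideal :: "'a pmon \<Rightarrow> 'a set \<Rightarrow> bool" where
  "pm_ideal M I \<longleftrightarrow> I \<subseteq> pm_carrier M \<and> pm_zero M \<in> I \<and>
     (\<forall>a\<in>pm_carrier M. \<forall>x\<in>I. pm_mult M a x \<in> I)"

definition pm_prime_ideal :: "'a pmon \<Rightarrow> 'a set \<Rightarrow> bool" where
  "pm_prime_ideal M P \<longleftrightarrow> pm_ideal M P \<and> P \<noteq> pm_carrier M \<and>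
     (\<forall>a\<in>pm_carrier M - P. \<forall>b\<in>pm_carrier M - P. pm_mult M a b \<notin> P)"

definition pm_quot :: "'a pmon \<Rightarrow> 'a set \<Rightarrow> 'a pmon" where
  "pm_quot M I =
     \<lparr> pm_carrier = (pm_carrier M - I) \<union> {pm_zero M},
       pm_mult = (\<lambda>a b. if a \<in> I \<or> b \<in> I \<or> pm_mult M a b \<in> I then pm_zero M else pm_mult M a b),
       pm_one = (if pm_one M \<in> I then pm_zero M else pm_one M),
       pm_zero = pm_zero M \<rparr>"

definition pm_iso :: "('a \<Rightarrow> 'b) \<Rightarrow> 'a pmon \<Rightarrow> 'b pmon \<Rightarrow> bool" where
  "pm_iso f M N \<longleftrightarrow> bij_betw f (pm_carrier M) (pm_carrier N) \<and>
     (\<forall>a\<in>pm_carrier M. \<forall>b\<in>pm_carrier M. f (pm_mult M a b) = pm_mult N (f a) (f b)) \<and>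
     f (pm_one M) = pm_one N \<and> f (pm_zero M) = pm_zero N"

definition cancellative :: "'a pmon \<Rightarrow> bool" where
  "cancellative M \<longleftrightarrow> pointed_monoid M \<and>
     (\<forall>a\<in>pm_carrier M. \<forall>b\<in>pm_carrier M. \<forall>c\<in>pm_carrier M.
        c \<noteq> pm_zero M \<longrightarrow> pm_mult M a c = pm_mult M b c \<longrightarrow> a = b)"

definition torsionfree :: "'a pmon \<Rightarrow> bool" where
  "torsionfree M \<longleftrightarrow> (\<forall>a\<in>pm_carrier M. \<forall>b\<in>pm_carrier M. \<forall>n::nat. n \<ge> 1 \<longrightarrow>
        pm_pow M a n = pm_pow M b n \<longrightarrow> a = b)"

text \<open>The type of C is passed as a parameter; a free type variable in a hypothesis
  amounts to existential quantification over the type.\<close>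
definition pc :: "'c itself \<Rightarrow> 'a pmon \<Rightarrow> bool" where
  "pc _ A \<longleftrightarrow> (\<exists>(C::'c pmon) I f. cancellative C \<and> pm_ideal C I \<and> pm_iso f (pm_quot C I) A)"

definition pctf :: "'c itself \<Rightarrow> 'a pmon \<Rightarrow> bool" where
  "pctf _ A \<longleftrightarrow> (\<exists>(C::'c pmon) I f. cancellative C \<and> torsionfree C \<and> pm_ideal C I \<and>
      pm_iso f (pm_quot C I) A)"

definition gc_rel :: "'a pmon \<Rightarrow> (('a \<times> 'a) \<times> ('a \<times> 'a)) set" where
  "gc_rel C = {((a,b),(c,d)). a \<in> pm_carrier C - {pm_zero C} \<and> b \<in> pm_carrier C - {pm_zero C} \<and>
       c \<in> pm_carrier C - {pm_zero C} \<and> d \<in> pm_carrier C - {pm_zero C} \<and>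
       pm_mult C a d = pm_mult C b c}"

text \<open>Elements of C^+: equivalence classes of fractions a/b, plus the basepoint (the empty set).\<close>
definition group_completion :: "'a pmon \<Rightarrow> ('a \<times> 'a) set pmon" where
  "group_completion C =
     \<lparr> pm_carrier = ((pm_carrier C - {pm_zero C}) \<times> (pm_carrier C - {pm_zero C})) // gc_rel C \<union> {{}},
       pm_mult = (\<lambda>X Y. \<Union>p\<in>X. \<Union>q\<in>Y. gc_rel C `` {(pm_mult C (fst p) (fst q), pm_mult C (snd p) (snd q))}),
       pm_one = gc_rel C `` {(pm_one C, pm_one C)},
       pm_zero = {} \<rparr>"

definition gc_emb :: "'a pmon \<Rightarrow> 'a \<Rightarrow> ('a \<times> 'a) set" where
  "gc_emb C a = (if a = pm_zero C then {} else gc_rel C `` {(a, pm_one C)})"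

definition pointed_group :: "'a pmon \<Rightarrow> bool" where
  "pointed_group G \<longleftrightarrow> pointed_monoid G \<and> pm_one G \<noteq> pm_zero G \<and>
     (\<forall>x\<in>pm_carrier G - {pm_zero G}. \<exists>y\<in>pm_carrier G. pm_mult G x y = pm_one G)"

definition torsionfree_pgroup :: "'a pmon \<Rightarrow> bool" where
  "torsionfree_pgroup G \<longleftrightarrow> pointed_group G \<and>
     (\<forall>x\<in>pm_carrier G - {pm_zero G}. \<forall>n::nat. n \<ge> 1 \<longrightarrow> pm_pow G x n = pm_one G \<longrightarrow> x = pm_one G)"

definition normalization :: "'a pmon \<Rightarrow> ('a \<times> 'a) set set" where
  "normalization C = {\<alpha> \<in> pm_carrier (group_completion C).
      \<exists>n::nat. n \<ge> 1 \<and> pm_pow (group_completion C) \<alpha> n \<in> gc_emb C ` pm_carrier C}"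

definition normal :: "'a pmon \<Rightarrow> bool" where
  "normal C \<longleftrightarrow> normalization C = gc_emb C ` pm_carrier C"

end

(* Proof idea: A/p is (A - p) \<union> {0}, and because p is prime, products and powers of elements
   outside p are computed in A and stay outside p; in particular they are never the basepoint.
   Hence A/p is cancellative (torsionfree) as soon as A satisfies cancellation (torsion-freeness)
   for products (powers) different from the basepoint. These weak laws hold in every C/I with C
   cancellative (torsionfree) and are invariant under isomorphism, which gives (1), and (2)
   because the group completion of a cancellative torsionfree monoid is torsionfree.
   For (3), normality of a cancellative monoid says that b^n | a^n implies b | a; a witness d of
   b | a lies outside p since a does, so the property descends to A/p. *)

theory Submission
  imports Defs
begin

locale pmonoid =
  fixes M :: "'a pmon"
  assumes pointed_monoid: "pointed_monoid M"
begin

abbreviation mult :: "'a \<Rightarrow> 'a \<Rightarrow> 'a"  (infixl \<open>\<cdot>\<close> 70)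
  where "a \<cdot> b \<equiv> pm_mult M a b"
abbreviation one :: 'a  (\<open>\<one>\<close>)
  where "\<one> \<equiv> pm_one M"
abbreviation zero :: 'a  (\<open>\<zero>\<close>)
  where "\<zero> \<equiv> pm_zero M"
abbreviation nonzeros :: "'a set"
  where "nonzeros \<equiv> pm_carrier M - {\<zero>}"

lemma m_closed [intro, simp]: "a \<in> pm_carrier M \<Longrightarrow> b \<in> pm_carrier M \<Longrightarrow> a \<cdot> b \<in> pm_carrier M"
  and one_closed [simp]: "\<one> \<in> pm_carrier M"
  and zero_closed [simp]: "\<zero> \<in> pm_carrier M"
  and m_assoc: "a \<in> pm_carrier M \<Longrightarrow> b \<in> pm_carrier M \<Longrightarrow> c \<in> pm_carrier M \<Longrightarrow> a \<cdot> b \<cdot> c = a \<cdot> (b \<cdot> c)"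
  and m_comm: "a \<in> pm_carrier M \<Longrightarrow> b \<in> pm_carrier M \<Longrightarrow> a \<cdot> b = b \<cdot> a"
  and l_one [simp]: "a \<in> pm_carrier M \<Longrightarrow> \<one> \<cdot> a = a"
  and l_null [simp]: "a \<in> pm_carrier M \<Longrightarrow> \<zero> \<cdot> a = \<zero>"
  using pointed_monoid unfolding pointed_monoid_def by blast+

lemma m_lcomm: "a \<in> pm_carrier M \<Longrightarrow> b \<in> pm_carrier M \<Longrightarrow> c \<in> pm_carrier M \<Longrightarrow> a \<cdot> (b \<cdot> c) = b \<cdot> (a \<cdot> c)"
  by (metis m_assoc m_comm)

lemmas m_ac = m_assoc m_comm m_lcomm

lemma r_one [simp]: "a \<in> pm_carrier M \<Longrightarrow> a \<cdot> \<one> = a"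
  and r_null [simp]: "a \<in> pm_carrier M \<Longrightarrow> a \<cdot> \<zero> = \<zero>"
  by (simp_all add: m_comm[of a])

lemma pow_closed [simp]: "a \<in> pm_carrier M \<Longrightarrow> pm_pow M a n \<in> pm_carrier M"
  by (induction n) auto

lemma pow_zero: "n \<ge> 1 \<Longrightarrow> pm_pow M \<zero> n = \<zero>"
  by (cases n) auto

lemma quot_carrier: "pm_carrier (pm_quot M I) = (pm_carrier M - I) \<union> {\<zero>}"
  and quot_one: "pm_one (pm_quot M I) = (if \<one> \<in> I then \<zero> else \<one>)"
  and quot_zero [simp]: "pm_zero (pm_quot M I) = \<zero>"
  by (simp_all add: pm_quot_def)

lemma quot_carrier_subset: "pm_carrier (pm_quot M I) \<subseteq> pm_carrier M"
  by (auto simp: quot_carrier)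

lemma quot_mult_nonzero:
  "pm_mult (pm_quot M I) a b \<noteq> \<zero> \<Longrightarrow> pm_mult (pm_quot M I) a b = a \<cdot> b \<and> a \<notin> I \<and> b \<notin> I"
  by (auto simp: pm_quot_def split: if_splits)

lemma ideal_absorbs:
  assumes "pm_ideal M I" "a \<in> pm_carrier M" "b \<in> pm_carrier M"
  shows "a \<in> I \<Longrightarrow> a \<cdot> b \<in> I" and "b \<in> I \<Longrightarrow> a \<cdot> b \<in> I"
  using assms m_comm[of a b] unfolding pm_ideal_def by (metis subsetD)+

lemma quot_mult:
  assumes "pm_ideal M I" "a \<in> pm_carrier M" "b \<in> pm_carrier M"
  shows "pm_mult (pm_quot M I) a b = (if a \<cdot> b \<in> I then \<zero> else a \<cdot> b)"
  using ideal_absorbs[OF assms] by (auto simp: pm_quot_def)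

lemma pointed_monoid_quot:
  assumes ideal: "pm_ideal M I"
  shows "pointed_monoid (pm_quot M I)"
proof -
  have zero_in: "\<zero> \<in> I"
    using ideal by (simp add: pm_ideal_def)
  note absorbs = ideal_absorbs[OF ideal]
  have one_in_ideal: "pm_carrier (pm_quot M I) = {\<zero>}" if "\<one> \<in> I"
    using absorbs(1)[OF _ _ that] by (auto simp: quot_carrier)
  have assoc: "pm_mult (pm_quot M I) (pm_mult (pm_quot M I) a b) c
      = pm_mult (pm_quot M I) a (pm_mult (pm_quot M I) b c)"
    if "a \<in> pm_carrier M" "b \<in> pm_carrier M" "c \<in> pm_carrier M" for a b c
    using that absorbs[of "a \<cdot> b" c] absorbs[of a "b \<cdot> c"] zero_in
    by (auto simp: quot_mult[OF ideal] m_assoc)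
  show ?thesis
    unfolding pointed_monoid_def
    using zero_in absorbs one_in_ideal quot_carrier_subset assoc
    by (auto simp: quot_mult[OF ideal] quot_one quot_carrier m_comm)
qed

lemma quot_pow_nonzero:
  assumes "\<zero> \<in> I" "pm_pow (pm_quot M I) a n \<noteq> \<zero>"
  shows "pm_pow (pm_quot M I) a n = pm_pow M a n"
  using assms(2)
proof (induction n)
  case 0
  then show ?case by (simp add: quot_one split: if_splits)
next
  case (Suc n)
  then have "pm_pow (pm_quot M I) a n \<noteq> \<zero>"
    using quot_mult_nonzero assms(1) by fastforce
  then show ?case using Suc quot_mult_nonzero by fastforce
qed

end

text \<open>The forms of cancellation and torsion-freeness that survive the passage from C to C/I.\<close>

definition weakly_cancellative :: "'a pmon \<Rightarrow> bool" where
  "weakly_cancellative M \<longleftrightarrow> (\<forall>a\<in>pm_carrier M. \<forall>b\<in>pm_carrier M. \<forall>c\<in>pm_carrier M.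
     pm_mult M a c = pm_mult M b c \<longrightarrow> pm_mult M a c \<noteq> pm_zero M \<longrightarrow> a = b)"

definition weakly_torsionfree :: "'a pmon \<Rightarrow> bool" where
  "weakly_torsionfree M \<longleftrightarrow> (\<forall>a\<in>pm_carrier M. \<forall>b\<in>pm_carrier M. \<forall>n::nat. n \<ge> 1 \<longrightarrow>
     pm_pow M a n = pm_pow M b n \<longrightarrow> pm_pow M a n \<noteq> pm_zero M \<longrightarrow> a = b)"

context pmonoid
begin

lemma cancellative_imp_weakly_cancellative: "cancellative M \<Longrightarrow> weakly_cancellative M"
  unfolding cancellative_def weakly_cancellative_def by (metis r_null)

lemma weakly_cancellative_quot:
  assumes "cancellative M" "\<zero> \<in> I"
  shows "weakly_cancellative (pm_quot M I)"
  unfolding weakly_cancellative_def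
proof (intro ballI impI)
  fix a b c
  assume "a \<in> pm_carrier (pm_quot M I)" "b \<in> pm_carrier (pm_quot M I)" "c \<in> pm_carrier (pm_quot M I)"
    and eq: "pm_mult (pm_quot M I) a c = pm_mult (pm_quot M I) b c"
    and nonzero: "pm_mult (pm_quot M I) a c \<noteq> pm_zero (pm_quot M I)"
  then have "a \<cdot> c = b \<cdot> c" "c \<noteq> \<zero>" "a \<in> pm_carrier M" "b \<in> pm_carrier M" "c \<in> pm_carrier M"
    using quot_mult_nonzero[of I a c] quot_mult_nonzero[of I b c] quot_carrier_subset assms(2)
    by auto
  then show "a = b"
    using assms(1) unfolding cancellative_def by blast
qed

lemma weakly_torsionfree_quot:
  assumes "torsionfree M" "\<zero> \<in> I"
  shows "weakly_torsionfree (pm_quot M I)"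
  unfolding weakly_torsionfree_def
proof (intro ballI allI impI)
  fix a b and n :: nat
  assume "a \<in> pm_carrier (pm_quot M I)" "b \<in> pm_carrier (pm_quot M I)" "n \<ge> 1"
    and eq: "pm_pow (pm_quot M I) a n = pm_pow (pm_quot M I) b n"
    and nonzero: "pm_pow (pm_quot M I) a n \<noteq> pm_zero (pm_quot M I)"
  then have "pm_pow M a n = pm_pow M b n" "a \<in> pm_carrier M" "b \<in> pm_carrier M"
    using quot_pow_nonzero[OF assms(2), of a n] quot_pow_nonzero[OF assms(2), of b n]
      quot_carrier_subset
    by auto
  then show "a = b"
    using assms(1) \<open>n \<ge> 1\<close> unfolding torsionfree_def by blast
qed

lemma iso_mult: "pm_iso f M N \<Longrightarrow> a \<in> pm_carrier M \<Longrightarrow> b \<in> pm_carrier M \<Longrightarrow> f (a \<cdot> b) = pm_mult N (f a) (f b)"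
  and iso_one: "pm_iso f M N \<Longrightarrow> f \<one> = pm_one N"
  and iso_zero: "pm_iso f M N \<Longrightarrow> f \<zero> = pm_zero N"
  unfolding pm_iso_def by blast+

lemma iso_pow: "pm_iso f M N \<Longrightarrow> a \<in> pm_carrier M \<Longrightarrow> f (pm_pow M a n) = pm_pow N (f a) n"
  by (induction n) (simp_all add: iso_mult iso_one)

lemma iso_preimage:
  assumes "pm_iso f M N" "x \<in> pm_carrier N"
  obtains a where "a \<in> pm_carrier M" "x = f a"
  using assms unfolding pm_iso_def bij_betw_def by blast

lemma iso_inj:
  assumes "pm_iso f M N" "a \<in> pm_carrier M" "b \<in> pm_carrier M" "f a = f b"
  shows "a = b"
  using assms unfolding pm_iso_def bij_betw_def inj_on_def by blast

lemma weakly_cancellative_iso: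
  assumes iso: "pm_iso f M N" and wc: "weakly_cancellative M"
  shows "weakly_cancellative N"
  unfolding weakly_cancellative_def
proof (intro ballI impI)
  fix x y z
  assume x: "x \<in> pm_carrier N" and y: "y \<in> pm_carrier N" and z: "z \<in> pm_carrier N"
    and eq: "pm_mult N x z = pm_mult N y z" and nonzero: "pm_mult N x z \<noteq> pm_zero N"
  obtain a where a: "a \<in> pm_carrier M" "x = f a" by (rule iso_preimage[OF iso x])
  obtain b where b: "b \<in> pm_carrier M" "y = f b" by (rule iso_preimage[OF iso y])
  obtain c where c: "c \<in> pm_carrier M" "z = f c" by (rule iso_preimage[OF iso z])
  have "f (a \<cdot> c) = f (b \<cdot> c)" "f (a \<cdot> c) \<noteq> f \<zero>"
    using a b c eq nonzero by (simp_all add: iso_mult[OF iso] iso_zero[OF iso])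
  then have "a \<cdot> c = b \<cdot> c" "a \<cdot> c \<noteq> \<zero>"
    using a b c by (metis iso_inj[OF iso] m_closed, metis)
  then show "x = y"
    using wc a b c unfolding weakly_cancellative_def by blast
qed

lemma weakly_torsionfree_iso:
  assumes iso: "pm_iso f M N" and wt: "weakly_torsionfree M"
  shows "weakly_torsionfree N"
  unfolding weakly_torsionfree_def
proof (intro ballI allI impI)
  fix x y and n :: nat
  assume x: "x \<in> pm_carrier N" and y: "y \<in> pm_carrier N" and "n \<ge> 1"
    and eq: "pm_pow N x n = pm_pow N y n" and nonzero: "pm_pow N x n \<noteq> pm_zero N"
  obtain a where a: "a \<in> pm_carrier M" "x = f a" by (rule iso_preimage[OF iso x])
  obtain b where b: "b \<in> pm_carrier M" "y = f b" by (rule iso_preimage[OF iso y])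
  have "f (pm_pow M a n) = f (pm_pow M b n)" "f (pm_pow M a n) \<noteq> f \<zero>"
    using a b eq nonzero by (simp_all add: iso_pow[OF iso] iso_zero[OF iso])
  then have "pm_pow M a n = pm_pow M b n" "pm_pow M a n \<noteq> \<zero>"
    using a b by (metis iso_inj[OF iso] pow_closed, metis)
  then show "x = y"
    using wt a b \<open>n \<ge> 1\<close> unfolding weakly_torsionfree_def by blast
qed

end

lemma pc_imp_weakly_cancellative:
  assumes "pc TYPE('c) A"
  shows "weakly_cancellative A"
proof -
  obtain C :: "'c pmon" and I f
    where C: "cancellative C" and I: "pm_ideal C I" and iso: "pm_iso f (pm_quot C I) A"
    using assms unfolding pc_def by blast
  interpret C: pmonoid C
    using C by (simp add: pmonoid_def cancellative_def)
  interpret CI: pmonoid "pm_quot C I"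
    using C.pointed_monoid_quot[OF I] by (rule pmonoid.intro)
  show ?thesis
    using CI.weakly_cancellative_iso[OF iso] C.weakly_cancellative_quot[OF C] I
    by (simp add: pm_ideal_def)
qed

lemma pctf_imp_pc: "pctf TYPE('c) A \<Longrightarrow> pc TYPE('c) A"
  unfolding pctf_def pc_def by blast

lemma pctf_imp_weakly_torsionfree:
  assumes "pctf TYPE('c) A"
  shows "weakly_torsionfree A"
proof -
  obtain C :: "'c pmon" and I f
    where C: "cancellative C" "torsionfree C" and I: "pm_ideal C I" and iso: "pm_iso f (pm_quot C I) A"
    using assms unfolding pctf_def by blast
  interpret C: pmonoid C
    using C by (simp add: pmonoid_def cancellative_def)
  interpret CI: pmonoid "pm_quot C I"
    using C.pointed_monoid_quot[OF I] by (rule pmonoid.intro)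
  show ?thesis
    using CI.weakly_torsionfree_iso[OF iso] C.weakly_torsionfree_quot[OF C(2)] I
    by (simp add: pm_ideal_def)
qed

text \<open>For a cancellative monoid, being normal is the statement that (a/b)^n \<in> M implies a/b \<in> M,
  read inside M.\<close>

definition root_closed :: "'a pmon \<Rightarrow> bool" where
  "root_closed M \<longleftrightarrow> (\<forall>a\<in>pm_carrier M - {pm_zero M}. \<forall>b\<in>pm_carrier M - {pm_zero M}. \<forall>n::nat.
     n \<ge> 1 \<longrightarrow> (\<exists>c\<in>pm_carrier M. pm_pow M a n = pm_mult M (pm_pow M b n) c) \<longrightarrow>
     (\<exists>d\<in>pm_carrier M. a = pm_mult M b d))"

locale cancellative_pmonoid = pmonoid +
  assumes cancellative: "cancellative M"
    and one_ne_zero [simp]: "\<one> \<noteq> \<zero>"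

lemma (in pmonoid) cancellative_pmonoidI: "cancellative M \<Longrightarrow> \<one> \<noteq> \<zero> \<Longrightarrow> cancellative_pmonoid M"
  by unfold_locales

context cancellative_pmonoid
begin

abbreviation frac :: "'a \<Rightarrow> 'a \<Rightarrow> ('a \<times> 'a) set"
  where "frac a b \<equiv> gc_rel M `` {(a, b)}"

lemma cancel: "a \<in> pm_carrier M \<Longrightarrow> b \<in> pm_carrier M \<Longrightarrow> c \<in> nonzeros \<Longrightarrow> a \<cdot> c = b \<cdot> c \<Longrightarrow> a = b"
  using cancellative unfolding cancellative_def by blast

lemma m_nonzero [simp]:
  "a \<in> pm_carrier M \<Longrightarrow> b \<in> pm_carrier M \<Longrightarrow> a \<noteq> \<zero> \<Longrightarrow> b \<noteq> \<zero> \<Longrightarrow> a \<cdot> b \<noteq> \<zero>"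
  using cancel[of \<zero> a b] by auto

lemma pow_nonzero [simp]: "a \<in> pm_carrier M \<Longrightarrow> a \<noteq> \<zero> \<Longrightarrow> pm_pow M a n \<noteq> \<zero>"
  by (induction n) simp_all

lemma gc_rel_iff [simp]:
  "((a, b), (c, d)) \<in> gc_rel M \<longleftrightarrow> a \<in> nonzeros \<and> b \<in> nonzeros \<and> c \<in> nonzeros \<and> d \<in> nonzeros \<and> a \<cdot> d = b \<cdot> c"
  by (simp add: gc_rel_def)

lemma gc_rel_trans:
  assumes "((a, b), (c, d)) \<in> gc_rel M" "((c, d), (g, h)) \<in> gc_rel M"
  shows "((a, b), (g, h)) \<in> gc_rel M"
proof -
  have nz: "a \<in> nonzeros" "b \<in> nonzeros" "c \<in> nonzeros" "d \<in> nonzeros" "g \<in> nonzeros" "h \<in> nonzeros"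
    and eq: "a \<cdot> d = b \<cdot> c" "c \<cdot> h = d \<cdot> g"
    using assms by simp_all
  have "a \<cdot> h \<cdot> (c \<cdot> d) = (a \<cdot> d) \<cdot> (c \<cdot> h)" using nz by (simp add: m_ac)
  also have "\<dots> = (b \<cdot> c) \<cdot> (d \<cdot> g)" by (simp only: eq)
  also have "\<dots> = b \<cdot> g \<cdot> (c \<cdot> d)" using nz by (simp add: m_ac)
  finally show ?thesis
    using nz cancel[of "a \<cdot> h" "b \<cdot> g" "c \<cdot> d"] by simp
qed

lemma equiv_gc_rel: "equiv (nonzeros \<times> nonzeros) (gc_rel M)"
proof (rule equivI)
  show "gc_rel M \<subseteq> (nonzeros \<times> nonzeros) \<times> (nonzeros \<times> nonzeros)"
    by (auto simp: gc_rel_def)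
  show "refl_on (nonzeros \<times> nonzeros) (gc_rel M)"
    by (auto simp: refl_on_def gc_rel_def m_comm)
  show "sym (gc_rel M)"
    by (auto simp: sym_def gc_rel_def m_comm)
  show "trans (gc_rel M)"
    unfolding trans_def by (fast intro: gc_rel_trans)
qed

lemma frac_eq_iff:
  "a \<in> nonzeros \<Longrightarrow> b \<in> nonzeros \<Longrightarrow> c \<in> nonzeros \<Longrightarrow> d \<in> nonzeros \<Longrightarrow> frac a b = frac c d \<longleftrightarrow> a \<cdot> d = b \<cdot> c"
  using eq_equiv_class_iff[OF equiv_gc_rel] by simp

lemma frac_self: "a \<in> nonzeros \<Longrightarrow> b \<in> nonzeros \<Longrightarrow> (a, b) \<in> frac a b"
  by (simp add: m_comm)

lemma frac_nonempty [simp]: "a \<in> nonzeros \<Longrightarrow> b \<in> nonzeros \<Longrightarrow> frac a b \<noteq> {}"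
  using frac_self by blast

abbreviation G :: "('a \<times> 'a) set pmon"
  where "G \<equiv> group_completion M"

lemma G_carrier_iff: "X \<in> pm_carrier G \<longleftrightarrow> X = {} \<or> (\<exists>a\<in>nonzeros. \<exists>b\<in>nonzeros. X = frac a b)"
  by (auto simp: group_completion_def quotient_def)

lemma G_cases [consumes 1, case_names zero frac]:
  assumes "X \<in> pm_carrier G"
  obtains "X = {}" | a b where "a \<in> nonzeros" "b \<in> nonzeros" "X = frac a b"
  using assms by (auto simp: G_carrier_iff)

lemma empty_in_G [simp]: "{} \<in> pm_carrier G"
  and frac_in_G [simp]: "a \<in> nonzeros \<Longrightarrow> b \<in> nonzeros \<Longrightarrow> frac a b \<in> pm_carrier G"
  by (auto simp: G_carrier_iff)

lemma G_zero [simp]: "pm_zero G = {}"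
  and G_one [simp]: "pm_one G = frac \<one> \<one>"
  and G_mult_empty [simp]: "pm_mult G {} X = {}" "pm_mult G X {} = {}"
  by (simp_all add: group_completion_def)

lemma G_mult_frac [simp]:
  assumes "a \<in> nonzeros" "b \<in> nonzeros" "c \<in> nonzeros" "d \<in> nonzeros"
  shows "pm_mult G (frac a b) (frac c d) = frac (a \<cdot> c) (b \<cdot> d)"
proof -
  have well_defined: "frac (a' \<cdot> c') (b' \<cdot> d') = frac (a \<cdot> c) (b \<cdot> d)"
    if "(a', b') \<in> frac a b" "(c', d') \<in> frac c d" for a' b' c' d'
  proof -
    have nz: "a' \<in> nonzeros" "b' \<in> nonzeros" "c' \<in> nonzeros" "d' \<in> nonzeros"
      and eq: "a \<cdot> b' = b \<cdot> a'" "c \<cdot> d' = d \<cdot> c'"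
      using that by simp_all
    have "a' \<cdot> c' \<cdot> (b \<cdot> d) = (b \<cdot> a') \<cdot> (d \<cdot> c')" using nz assms by (simp add: m_ac)
    also have "\<dots> = (a \<cdot> b') \<cdot> (c \<cdot> d')" by (simp only: eq)
    also have "\<dots> = b' \<cdot> d' \<cdot> (a \<cdot> c)" using nz assms by (simp add: m_ac)
    finally show ?thesis
      using nz assms by (simp add: frac_eq_iff)
  qed
  have "pm_mult G (frac a b) (frac c d)
      = (\<Union>p\<in>frac a b. \<Union>q\<in>frac c d. frac (fst p \<cdot> fst q) (snd p \<cdot> snd q))"
    by (simp add: group_completion_def)
  also have "\<dots> = (\<Union>p\<in>frac a b. \<Union>q\<in>frac c d. frac (a \<cdot> c) (b \<cdot> d))"
    by (intro SUP_cong refl) (metis prod.collapse well_defined)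
  also have "\<dots> = frac (a \<cdot> c) (b \<cdot> d)"
    using frac_nonempty assms by simp
  finally show ?thesis .
qed

lemma G_pow_frac:
  "a \<in> nonzeros \<Longrightarrow> b \<in> nonzeros \<Longrightarrow> pm_pow G (frac a b) n = frac (pm_pow M a n) (pm_pow M b n)"
  by (induction n) simp_all

lemma pointed_monoid_G: "pointed_monoid G"
  unfolding pointed_monoid_def
  by (intro conjI ballI; (elim G_cases)?; simp add: m_ac)

lemma G_nonzeroE:
  assumes "X \<in> pm_carrier G - {pm_zero G}"
  obtains a b where "a \<in> nonzeros" "b \<in> nonzeros" "X = frac a b"
  using assms by (auto simp: G_carrier_iff)

lemma pointed_group_G: "pointed_group G"
  unfolding pointed_group_def
proof (intro conjI ballI)
  show "pointed_monoid G" by (rule pointed_monoid_G)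
  show "pm_one G \<noteq> pm_zero G"
    using frac_nonempty by simp
  fix X
  assume "X \<in> pm_carrier G - {pm_zero G}"
  then obtain a b where nz: "a \<in> nonzeros" "b \<in> nonzeros" and X: "X = frac a b"
    by (rule G_nonzeroE)
  have "pm_mult G X (frac b a) = pm_one G"
    using nz by (simp add: X frac_eq_iff m_comm)
  then show "\<exists>Y\<in>pm_carrier G. pm_mult G X Y = pm_one G"
    using nz frac_in_G by blast
qed

lemma torsionfree_pgroup_G:
  assumes "torsionfree M"
  shows "torsionfree_pgroup G"
  unfolding torsionfree_pgroup_def
proof (intro conjI ballI allI impI)
  show "pointed_group G" by (rule pointed_group_G)
  fix X and n :: nat
  assume "X \<in> pm_carrier G - {pm_zero G}" and "n \<ge> 1" and pow: "pm_pow G X n = pm_one G"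
  from \<open>X \<in> pm_carrier G - {pm_zero G}\<close> obtain a b where nz: "a \<in> nonzeros" "b \<in> nonzeros" and X: "X = frac a b"
    by (rule G_nonzeroE)
  have "pm_pow M a n = pm_pow M b n"
    using pow nz by (simp add: X G_pow_frac frac_eq_iff)
  then have "a = b"
    using assms nz \<open>n \<ge> 1\<close> unfolding torsionfree_def by blast
  then show "X = pm_one G"
    using nz by (simp add: X frac_eq_iff)
qed

lemma gc_emb_nonzero: "a \<in> nonzeros \<Longrightarrow> gc_emb M a = frac a \<one>"
  and gc_emb_zero: "gc_emb M \<zero> = {}"
  by (simp_all add: gc_emb_def)

lemma frac_in_gc_emb_iff:
  assumes "a \<in> nonzeros" "b \<in> nonzeros"
  shows "frac a b \<in> gc_emb M ` pm_carrier M \<longleftrightarrow> (\<exists>d\<in>pm_carrier M. a = b \<cdot> d)"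
proof
  assume "frac a b \<in> gc_emb M ` pm_carrier M"
  then obtain d where d: "d \<in> pm_carrier M" "frac a b = gc_emb M d"
    by blast
  then have "d \<noteq> \<zero>"
    using assms gc_emb_zero by auto
  then show "\<exists>d\<in>pm_carrier M. a = b \<cdot> d"
    using d assms by (auto simp: gc_emb_nonzero frac_eq_iff)
next
  assume "\<exists>d\<in>pm_carrier M. a = b \<cdot> d"
  then obtain d where d: "d \<in> pm_carrier M" "a = b \<cdot> d"
    by blast
  then have "d \<noteq> \<zero>"
    using assms by auto
  then have "frac a b = gc_emb M d"
    using d assms by (simp add: gc_emb_nonzero frac_eq_iff)
  then show "frac a b \<in> gc_emb M ` pm_carrier M"
    using d by blast
qed

lemma frac_in_normalization_iff:
  assumes "a \<in> nonzeros" "b \<in> nonzeros"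
  shows "frac a b \<in> normalization M \<longleftrightarrow>
    (\<exists>n\<ge>1. \<exists>c\<in>pm_carrier M. pm_pow M a n = pm_pow M b n \<cdot> c)"
  using assms by (simp add: normalization_def G_pow_frac frac_in_gc_emb_iff)

lemma gc_emb_subset_normalization: "gc_emb M ` pm_carrier M \<subseteq> normalization M"
proof
  fix X
  assume "X \<in> gc_emb M ` pm_carrier M"
  then obtain a where a: "a \<in> pm_carrier M" "X = gc_emb M a"
    by blast
  then have "X \<in> pm_carrier G"
    by (cases "a = \<zero>") (simp_all add: gc_emb_zero gc_emb_nonzero)
  moreover have "pm_pow G X 1 = X"
    using \<open>X \<in> pm_carrier G\<close> pmonoid.r_one[OF pmonoid.intro[OF pointed_monoid_G]] by simp
  ultimately show "X \<in> normalization M"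
    unfolding normalization_def using a by force
qed

lemma normal_iff_root_closed: "normal M \<longleftrightarrow> root_closed M"
proof -
  have "normal M \<longleftrightarrow> normalization M \<subseteq> gc_emb M ` pm_carrier M"
    unfolding normal_def using gc_emb_subset_normalization by blast
  also have "\<dots> \<longleftrightarrow> (\<forall>a\<in>nonzeros. \<forall>b\<in>nonzeros.
      frac a b \<in> normalization M \<longrightarrow> frac a b \<in> gc_emb M ` pm_carrier M)"
  proof
    assume fracs: "\<forall>a\<in>nonzeros. \<forall>b\<in>nonzeros.
      frac a b \<in> normalization M \<longrightarrow> frac a b \<in> gc_emb M ` pm_carrier M"
    show "normalization M \<subseteq> gc_emb M ` pm_carrier M"
    proof
      fix X
      assume X: "X \<in> normalization M"
      then have "X \<in> pm_carrier G"
        by (simp add: normalization_def)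
      then show "X \<in> gc_emb M ` pm_carrier M"
      proof (cases rule: G_cases)
        case zero
        then show ?thesis
          using gc_emb_zero zero_closed by (metis image_eqI)
      next
        case (frac a b)
        then show ?thesis
          using fracs X by blast
      qed
    qed
  qed blast
  also have "\<dots> \<longleftrightarrow> root_closed M"
    unfolding root_closed_def by (simp add: frac_in_normalization_iff frac_in_gc_emb_iff) blast
  finally show ?thesis .
qed

end

locale pmonoid_prime = pmonoid +
  fixes P :: "'a set"
  assumes prime_ideal: "pm_prime_ideal M P"
begin

abbreviation Q :: "'a pmon"
  where "Q \<equiv> pm_quot M P"

lemma ideal: "pm_ideal M P"
  and zero_in_prime [simp]: "\<zero> \<in> P"
  using prime_ideal by (simp_all add: pm_prime_ideal_def pm_ideal_def)

lemma mult_in_prime_iff: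
  assumes "a \<in> pm_carrier M" "b \<in> pm_carrier M"
  shows "a \<cdot> b \<in> P \<longleftrightarrow> a \<in> P \<or> b \<in> P"
  using prime_ideal ideal_absorbs[OF ideal assms] assms unfolding pm_prime_ideal_def by blast

lemma one_notin_prime [simp]: "\<one> \<notin> P"
proof
  assume "\<one> \<in> P"
  then have "pm_carrier M \<subseteq> P"
    using ideal_absorbs(2)[OF ideal _ one_closed] by force
  then show False
    using prime_ideal unfolding pm_prime_ideal_def pm_ideal_def by blast
qed

lemma one_ne_zero: "\<one> \<noteq> \<zero>"
  using one_notin_prime zero_in_prime by metis

lemma nonzeros_Q: "pm_carrier Q - {pm_zero Q} = pm_carrier M - P"
  using quot_carrier_subset by (auto simp: quot_carrier)

lemma pmonoid_Q: "pmonoid Q"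
  by (rule pmonoid.intro[OF pointed_monoid_quot[OF ideal]])

lemma Q_one [simp]: "pm_one Q = \<one>"
  by (simp add: quot_one)

lemma Q_mult:
  "a \<in> pm_carrier M \<Longrightarrow> b \<in> pm_carrier M \<Longrightarrow> pm_mult Q a b = (if a \<in> P \<or> b \<in> P then \<zero> else a \<cdot> b)"
  by (simp add: quot_mult[OF ideal] mult_in_prime_iff)

lemma pow_notin_prime: "a \<in> pm_carrier M - P \<Longrightarrow> pm_pow M a n \<notin> P"
  by (induction n) (auto simp: mult_in_prime_iff)

lemma Q_pow: "a \<in> pm_carrier M - P \<Longrightarrow> pm_pow Q a n = pm_pow M a n"
  by (induction n) (simp_all add: Q_mult pow_notin_prime)

lemma cancellative_Q:
  assumes "weakly_cancellative M"
  shows "cancellative Q"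
  unfolding cancellative_def
proof (intro conjI ballI impI)
  show "pointed_monoid Q"
    by (rule pointed_monoid_quot[OF ideal])
  fix a b c
  assume a: "a \<in> pm_carrier Q" and b: "b \<in> pm_carrier Q" and c: "c \<in> pm_carrier Q"
    and "c \<noteq> pm_zero Q" and eq: "pm_mult Q a c = pm_mult Q b c"
  then have c_M: "c \<in> pm_carrier M - P"
    using nonzeros_Q by blast
  have vanishes_iff: "pm_mult Q x c = \<zero> \<longleftrightarrow> x = \<zero>" if "x \<in> pm_carrier Q" for x
    using that c_M mult_in_prime_iff[of x c] by (auto simp: quot_carrier Q_mult)
  show "a = b"
  proof (cases "a = \<zero>")
    case True
    then show ?thesis
      using vanishes_iff[OF a] vanishes_iff[OF b] eq by simp
  next
    case False
    then have "b \<noteq> \<zero>"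
      using vanishes_iff[OF a] vanishes_iff[OF b] eq by simp
    then have a_M: "a \<in> pm_carrier M - P" and b_M: "b \<in> pm_carrier M - P"
      using False a b by (simp_all add: quot_carrier)
    then have "a \<cdot> c = b \<cdot> c" "a \<cdot> c \<notin> P"
      using eq c_M mult_in_prime_iff[of a c] by (simp_all add: Q_mult)
    then show ?thesis
      using assms a_M b_M c_M zero_in_prime unfolding weakly_cancellative_def by (metis DiffD1)
  qed
qed

lemma torsionfree_Q:
  assumes "weakly_torsionfree M"
  shows "torsionfree Q"
  unfolding torsionfree_def
proof (intro ballI allI impI)
  fix a b and n :: nat
  assume a: "a \<in> pm_carrier Q" and b: "b \<in> pm_carrier Q" and "n \<ge> 1"
    and eq: "pm_pow Q a n = pm_pow Q b n"
  have vanishes_iff: "pm_pow Q x n = \<zero> \<longleftrightarrow> x = \<zero>" if "x \<in> pm_carrier Q" for x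
    using that \<open>n \<ge> 1\<close> pmonoid.pow_zero[OF pmonoid_Q]
      pow_notin_prime[of x n] by (auto simp: quot_carrier Q_pow)
  show "a = b"
  proof (cases "a = \<zero>")
    case True
    then show ?thesis
      using vanishes_iff[OF a] vanishes_iff[OF b] eq by simp
  next
    case False
    then have "b \<noteq> \<zero>"
      using vanishes_iff[OF a] vanishes_iff[OF b] eq by simp
    then have a_M: "a \<in> pm_carrier M - P" and b_M: "b \<in> pm_carrier M - P"
      using False a b by (simp_all add: quot_carrier)
    have "pm_pow M a n = pm_pow M b n"
      using eq a_M b_M by (simp add: Q_pow)
    moreover have "pm_pow M a n \<notin> P"
      using pow_notin_prime[OF a_M] .
    ultimately show ?thesis
      using assms a_M b_M \<open>n \<ge> 1\<close> zero_in_prime unfolding weakly_torsionfree_def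
      by (metis DiffD1)
  qed
qed

lemma root_closed_Q:
  assumes "root_closed M"
  shows "root_closed Q"
  unfolding root_closed_def nonzeros_Q
proof (intro ballI allI impI)
  fix a b and n :: nat
  assume a: "a \<in> pm_carrier M - P" and b: "b \<in> pm_carrier M - P" and "n \<ge> 1"
    and "\<exists>c\<in>pm_carrier Q. pm_pow Q a n = pm_mult Q (pm_pow Q b n) c"
  then obtain c where c: "c \<in> pm_carrier Q" and eq: "pm_pow M a n = pm_mult Q (pm_pow M b n) c"
    by (auto simp: Q_pow)
  have c_M: "c \<in> pm_carrier M"
    using c quot_carrier_subset by blast
  have "c \<notin> P"
  proof
    assume "c \<in> P"
    then have "pm_pow M a n = \<zero>"
      using eq c_M b by (simp add: Q_mult)
    then show False
      using pow_notin_prime[OF a, of n] by simp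
  qed
  then have "pm_pow M a n = pm_pow M b n \<cdot> c"
    using eq c_M b pow_notin_prime[OF b, of n] by (simp add: Q_mult)
  moreover have "a \<in> nonzeros" "b \<in> nonzeros"
    using a b zero_in_prime by blast+
  ultimately obtain d where d: "d \<in> pm_carrier M" "a = b \<cdot> d"
    using assms \<open>n \<ge> 1\<close> c_M unfolding root_closed_def by blast
  then have "d \<notin> P"
    using a b mult_in_prime_iff[of b d] by auto
  then show "\<exists>d\<in>pm_carrier Q. a = pm_mult Q b d"
    using d b by (auto simp: quot_carrier Q_mult)
qed

lemma cancellative_pmonoid_Q: "cancellative Q \<Longrightarrow> cancellative_pmonoid Q"
  by (rule pmonoid.cancellative_pmonoidI[OF pmonoid_Q]) (simp_all add: one_ne_zero)

end

theorem proposition1p5: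
  fixes A :: "'a pmon" and P :: "'a set"
  assumes "pointed_monoid A"
    and "pm_prime_ideal A P"
  shows "(pc TYPE('c) A \<longrightarrow> cancellative (pm_quot A P))
       \<and> (pctf TYPE('d) A \<longrightarrow> torsionfree_pgroup (group_completion (pm_quot A P)))
       \<and> (cancellative A \<and> normal A \<longrightarrow> cancellative (pm_quot A P) \<and> normal (pm_quot A P))"
proof (intro conjI impI; (elim conjE)?)
  interpret pmonoid_prime A P
    using assms by (simp add: pmonoid_prime_def pmonoid_prime_axioms_def pmonoid_def)
  show "cancellative Q" if "pc TYPE('c) A"
    using that by (intro cancellative_Q pc_imp_weakly_cancellative)
  show "torsionfree_pgroup (group_completion Q)" if "pctf TYPE('d) A"
  proof -
    have "cancellative_pmonoid Q"
      using that by (intro cancellative_pmonoid_Q cancellative_Q pc_imp_weakly_cancellative pctf_imp_pc)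
    then show ?thesis
      using that by (intro cancellative_pmonoid.torsionfree_pgroup_G torsionfree_Q pctf_imp_weakly_torsionfree)
  qed
  assume "cancellative A" "normal A"
  then have "cancellative Q"
    by (intro cancellative_Q cancellative_imp_weakly_cancellative)
  moreover have "root_closed A"
    using \<open>normal A\<close> cancellative_pmonoid.normal_iff_root_closed[OF cancellative_pmonoidI]
      \<open>cancellative A\<close> one_ne_zero by blast
  ultimately show "cancellative Q" "normal Q"
    using cancellative_pmonoid.normal_iff_root_closed[OF cancellative_pmonoid_Q] root_closed_Q
    by blast+
qed

end
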